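(* Let $X$ be a nonnegative random variable with cumulative distribution function $F$, let $\gamma>0$ with $\mathbb{E}[\mathrm{e}^{\gamma X}]<\infty$, let $g\in\mathcal{G}$, and suppose there exists an optimal indemnity $\widehat{I}_g\in\mathcal{I}$ for the problem \[ \inf_{I\in\mathcal{I}} \mathbb{E}\Big[\mathrm{e}^{\gamma\,(X-I(X)+\pi(I))}\Big],\qquad \pi(I):=\mathbb{E}[g(I(X))]. \] Let $M:=\mathbb{E}[\mathrm{e}^{\gamma(X-\widehat{I}_g(X))}]$ and $d_g:=\frac{1}{\gamma}\ln(Mg'(0))$. Then the necessary condition satisfied by $\widehat{I}_g$ (namely $\widehat{I}_g(x)=0$ for $x\le d_g$, and for $x>d_g$, $\widehat{I}_g(x)\in(0,x)$ is the unique solution $y\in(0,x)$ of $\mathrm{e}^{\gamma(x-y)}=Mg'(y)$) implies that $\widehat{I}_g\in\mathcal{I}_c$, where \[ \mathcal{I}_c:=\{I\in\mathcal{I}\mid 0\le I(x')-I(x)\le x'-x \text{ for all } 0\le x\le x'\}. \] Moreover, $\widehat{I}_g$ is strictly increasing on $(d_g,\infty)$.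
   Context: $\mathcal{I}:=\{I:\mathbb{R}_+\to\mathbb{R} \text{ continuous} \mid 0\le I(x)\le x \text{ for all } x\ge 0\}$. $\mathcal{G}$ is the set of twice differentiable functions $g:\mathbb{R}_+\to\mathbb{R}_+$ with $g''\ge 0$, $g(0)=0$, $g(x)\ge x$ for all $x\ge 0$, and $g$ not identically equal to $x\mapsto x$ (so $g'\ge1$). *)

theory Defs
  imports "HOL-Probability.Probability"
begin

definition indemnities :: "(real \<Rightarrow> real) set" where
  "indemnities = {I. continuous_on {0..} I \<and> (\<forall>x\<ge>0. 0 \<le> I x \<and> I x \<le> x)}"

definition indemnities_c :: "(real \<Rightarrow> real) set" where
  "indemnities_c = {I \<in> indemnities. \<forall>x x'. 0 \<le> x \<and> x \<le> x' \<longrightarrow>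
                       0 \<le> I x' - I x \<and> I x' - I x \<le> x' - x}"

definition in_G :: "(real \<Rightarrow> real) \<Rightarrow> (real \<Rightarrow> real) \<Rightarrow> bool" where
  "in_G g g' \<longleftrightarrow>
     (\<exists>g''. \<forall>x\<ge>0. (g has_real_derivative g' x) (at x within {0..}) \<and>
                   (g' has_real_derivative g'' x) (at x within {0..}) \<and> g'' x \<ge> 0)
     \<and> (\<forall>x\<ge>0. g x \<ge> 0) \<and> g 0 = 0 \<and> (\<forall>x\<ge>0. g x \<ge> x) \<and> \<not> (\<forall>x\<ge>0. g x = x)"

definition premium :: "'a measure \<Rightarrow> ('a \<Rightarrow> real) \<Rightarrow> (real \<Rightarrow> real) \<Rightarrow> (real \<Rightarrow> real) \<Rightarrow> ennreal" where
  "premium P X g I = (\<integral>\<^sup>+ \<omega>. ennreal (g (I (X \<omega>))) \<partial>P)"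

definition objective :: "'a measure \<Rightarrow> ('a \<Rightarrow> real) \<Rightarrow> real \<Rightarrow> (real \<Rightarrow> real) \<Rightarrow> (real \<Rightarrow> real) \<Rightarrow> ennreal" where
  "objective P X \<gamma> g I =
     (if premium P X g I = \<infinity> then \<infinity>
      else \<integral>\<^sup>+ \<omega>. ennreal (exp (\<gamma> * (X \<omega> - I (X \<omega>) + enn2real (premium P X g I)))) \<partial>P)"

end

theory Submission
  imports Defs
begin

text \<open>At a loss \<open>x > d\<close> the indemnity \<open>y = Ihat x\<close> balances \<open>exp (\<gamma> * (x - y))\<close>
  against \<open>M * g' y\<close>. The first side is strictly increasing in the retention \<open>x - y\<close>, the
  second is nondecreasing in \<open>y\<close> because \<open>g\<close> is convex. Hence, as \<open>x = (x - y) + y\<close> grows,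
  neither the retention nor the indemnity can decrease, which is monotonicity together with the
  1-Lipschitz bound. The choice of \<open>d\<close> makes the pair \<open>(d, 0)\<close> balanced as well, and this
  glues the part above \<open>d\<close> to the zero part below it.\<close>

lemma derivative_nonneg_imp_mono_on_atLeast:
  fixes f f' :: "real \<Rightarrow> real"
  assumes "\<And>x. a \<le> x \<Longrightarrow> (f has_real_derivative f' x) (at x within {a..})"
    and "\<And>x. a \<le> x \<Longrightarrow> f' x \<ge> 0"
  shows "mono_on {a..} f"
proof (rule mono_onI)
  fix x y assume "x \<in> {a..}" "y \<in> {a..}" "x \<le> y"
  show "f x \<le> f y"
  proof (rule DERIV_nonneg_imp_increasing_open[OF \<open>x \<le> y\<close>])
    fix z assume "x < z" "z < y"
    then have "z \<in> interior {a..}" using \<open>x \<in> {a..}\<close> by simp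
    moreover have "a \<le> z" using \<open>x \<in> {a..}\<close> \<open>x < z\<close> by simp
    ultimately show "\<exists>l. (f has_real_derivative l) (at z) \<and> l \<ge> 0"
      using assms at_within_interior[of z "{a..}"] by metis
  next
    have "continuous_on {a..} f"
      using assms by (intro DERIV_continuous_on) auto
    then show "continuous_on {x..y} f"
      by (rule continuous_on_subset) (use \<open>x \<in> {a..}\<close> in auto)
  qed
qed

lemma in_G_deriv_mono_on:
  assumes "in_G g g'"
  shows "mono_on {0..} g'"
proof -
  obtain g'' where "\<forall>x\<ge>0. (g has_real_derivative g' x) (at x within {0..}) \<and>
      (g' has_real_derivative g'' x) (at x within {0..}) \<and> g'' x \<ge> 0"
    using assms unfolding in_G_def by (elim conjE exE)
  then show ?thesis
    using derivative_nonneg_imp_mono_on_atLeast[of 0 g' g''] by simp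
qed

lemma in_G_deriv_ge_1:
  assumes "in_G g g'"
  shows "1 \<le> g' 0"
proof -
  have "(g has_real_derivative g' 0) (at 0 within {0..})" and "g 0 = 0"
    and "\<forall>x\<ge>0. x \<le> g x"
    using assms unfolding in_G_def by auto
  then have "((\<lambda>x. g x / x) \<longlongrightarrow> g' 0) (at_right 0)"
    by (simp add: has_field_derivative_iff at_within_Ici_at_right)
  moreover have "\<forall>\<^sub>F x in at_right 0. 1 \<le> g x / x"
    using eventually_at_right_less[of 0] by eventually_elim (use \<open>\<forall>x\<ge>0. x \<le> g x\<close> in simp)
  ultimately show ?thesis
    by (intro tendsto_lowerbound) auto
qed

lemma balance_point_mono:
  fixes F H :: "real \<Rightarrow> real"
  assumes F: "strict_mono F" and H: "mono_on S H" and "a \<in> S" "b \<in> S"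
    and balance_a: "F (x - a) = H a" and balance_b: "F (y - b) = H b" and "x \<le> y"
  shows "a \<le> b" and "x - a \<le> y - b"
proof -
  show "a \<le> b"
  proof (rule ccontr)
    assume "\<not> a \<le> b"
    then have "F (y - b) \<le> F (x - a)"
      using balance_a balance_b mono_onD[OF H \<open>b \<in> S\<close> \<open>a \<in> S\<close>] by simp
    then have "y - b \<le> x - a"
      using F by (simp add: strict_mono_less_eq)
    then show False using \<open>\<not> a \<le> b\<close> \<open>x \<le> y\<close> by simp
  qed
  show "x - a \<le> y - b"
  proof (rule ccontr)
    assume "\<not> x - a \<le> y - b"
    then have "F (y - b) < F (x - a)"
      using F by (simp add: strict_mono_less)
    then have "H b < H a"
      using balance_a balance_b by simp
    then show False
      using mono_onD[OF H \<open>a \<in> S\<close> \<open>b \<in> S\<close> \<open>a \<le> b\<close>] by simp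
  qed
qed

lemma balance_point_strict_mono:
  fixes F H :: "real \<Rightarrow> real"
  assumes F: "strict_mono F" and H: "mono_on S H" and "a \<in> S" "b \<in> S"
    and balance_a: "F (x - a) = H a" and balance_b: "F (y - b) = H b" and "x < y"
  shows "a < b"
proof -
  have "a \<le> b"
    using balance_point_mono(1)[OF assms(1-6)] \<open>x < y\<close> by simp
  moreover have "a \<noteq> b"
  proof
    assume "a = b"
    then have "F (x - a) = F (y - a)" using balance_a balance_b by simp
    then show False using strict_mono_eq[OF F] \<open>x < y\<close> by simp
  qed
  ultimately show ?thesis by simp
qed

lemma threshold_balance_increments:
  fixes F H I :: "real \<Rightarrow> real"
  assumes F: "strict_mono F" and H: "mono_on {0..} H"
    and balance_d: "F d = H 0"
    and zero_below: "\<And>x. 0 \<le> x \<Longrightarrow> x \<le> d \<Longrightarrow> I x = 0"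
    and balance: "\<And>x. d < x \<Longrightarrow> I x \<in> {0..} \<and> F (x - I x) = H (I x)"
    and "0 \<le> x" "x \<le> x'"
  shows "0 \<le> I x' - I x \<and> I x' - I x \<le> x' - x"
proof -
  consider "x' \<le> d" | "x \<le> d" "d < x'" | "d < x" "d < x'"
    using \<open>x \<le> x'\<close> by linarith
  then show ?thesis
  proof cases
    case 1
    then show ?thesis using zero_below \<open>0 \<le> x\<close> \<open>x \<le> x'\<close> by simp
  next
    case 2
    have "0 \<in> {0::real..}" "I x' \<in> {0..}" "F (d - 0) = H 0" "F (x' - I x') = H (I x')" "d \<le> x'"
      using balance_d balance[OF \<open>d < x'\<close>] 2 by auto
    from balance_point_mono[OF F H this] have "0 \<le> I x'" "I x' \<le> x' - d" by simp_all
    moreover have "I x = 0" using zero_below \<open>0 \<le> x\<close> 2 by simp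
    ultimately show ?thesis using 2 by linarith
  next
    case 3
    have "I x \<in> {0..}" "I x' \<in> {0..}" "F (x - I x) = H (I x)" "F (x' - I x') = H (I x')"
      using balance[OF \<open>d < x\<close>] balance[OF \<open>d < x'\<close>] by auto
    from balance_point_mono[OF F H this \<open>x \<le> x'\<close>] show ?thesis by simp
  qed
qed

lemma threshold_balance_strict_mono_on:
  fixes F H I :: "real \<Rightarrow> real"
  assumes F: "strict_mono F" and H: "mono_on {0..} H"
    and balance: "\<And>x. d < x \<Longrightarrow> I x \<in> {0..} \<and> F (x - I x) = H (I x)"
  shows "strict_mono_on {d<..} I"
proof (rule strict_mono_onI)
  fix x y assume "x \<in> {d<..}" "y \<in> {d<..}" "x < y"
  then have "I x \<in> {0..}" "I y \<in> {0..}" "F (x - I x) = H (I x)" "F (y - I y) = H (I y)"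
    using balance by auto
  from balance_point_strict_mono[OF F H this \<open>x < y\<close>] show "I x < I y" .
qed

theorem corollary2p2:
  fixes P :: "'a measure" and X :: "'a \<Rightarrow> real" and \<gamma> :: real
    and g g' :: "real \<Rightarrow> real" and Ihat :: "real \<Rightarrow> real" and M d :: real
  assumes "prob_space P"
    and "X \<in> borel_measurable P"
    and "\<forall>\<omega>\<in>space P. 0 \<le> X \<omega>"
    and "\<gamma> > 0"
    and "integrable P (\<lambda>\<omega>. exp (\<gamma> * X \<omega>))"
    and "in_G g g'"
    and "Ihat \<in> indemnities"
    and "\<forall>I\<in>indemnities. objective P X \<gamma> g Ihat \<le> objective P X \<gamma> g I"
    and "M = (\<integral>\<omega>. exp (\<gamma> * (X \<omega> - Ihat (X \<omega>))) \<partial>P)"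
    and "d = ln (M * g' 0) / \<gamma>"
    and "\<forall>x. 0 \<le> x \<and> x \<le> d \<longrightarrow> Ihat x = 0"
    and "\<forall>x. x > d \<longrightarrow> 0 < Ihat x \<and> Ihat x < x
            \<and> exp (\<gamma> * (x - Ihat x)) = M * g' (Ihat x)
            \<and> (\<forall>y. 0 < y \<and> y < x \<and> exp (\<gamma> * (x - y)) = M * g' y \<longrightarrow> y = Ihat x)"
  shows "Ihat \<in> indemnities_c \<and> strict_mono_on {d<..} Ihat"
proof -
  \<comment> \<open>Optimality enters only through the necessary conditions on \<open>Ihat\<close>.\<close>
  have "d < x \<Longrightarrow> 0 < Ihat x \<and> exp (\<gamma> * (x - Ihat x)) = M * g' (Ihat x)" for x
    using assms(12) by blast
  then have balance: "d < x \<Longrightarrow> Ihat x \<in> {0..} \<and> exp (\<gamma> * (x - Ihat x)) = M * g' (Ihat x)" for x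
    by (simp add: less_imp_le)
  have zero_below: "0 \<le> x \<Longrightarrow> x \<le> d \<Longrightarrow> Ihat x = 0" for x
    using assms(11) by blast
  have "exp (\<gamma> * (d + 1 - Ihat (d + 1))) = M * g' (Ihat (d + 1))"
    using balance[of "d + 1"] by simp
  then have "M \<noteq> 0" by (metis exp_not_eq_zero mult_zero_left)
  moreover have "M \<ge> 0" unfolding assms(9) by simp
  ultimately have balance_d: "exp (\<gamma> * d) = M * g' 0"
    using in_G_deriv_ge_1[OF assms(6)] \<open>\<gamma> > 0\<close> unfolding assms(10) by simp
  have F: "strict_mono (\<lambda>z. exp (\<gamma> * z))"
    using \<open>\<gamma> > 0\<close> by (intro strict_monoI) simp
  have H: "mono_on {0..} (\<lambda>y. M * g' y)"
  proof (rule mono_onI)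
    fix r s :: real assume "r \<in> {0..}" "s \<in> {0..}" "r \<le> s"
    with in_G_deriv_mono_on[OF assms(6)] have "g' r \<le> g' s" by (rule mono_onD)
    with \<open>M \<ge> 0\<close> show "M * g' r \<le> M * g' s" by (simp add: mult_left_mono)
  qed
  have "Ihat \<in> indemnities_c"
    unfolding indemnities_c_def
  proof (intro CollectI conjI allI impI assms(7))
    fix x x' :: real assume "0 \<le> x \<and> x \<le> x'"
    then show "0 \<le> Ihat x' - Ihat x" "Ihat x' - Ihat x \<le> x' - x"
      using threshold_balance_increments[OF F H balance_d zero_below balance, of x x'] by simp_all
  qed
  moreover have "strict_mono_on {d<..} Ihat"
    using threshold_balance_strict_mono_on[OF F H balance] .
  ultimately show ?thesis by simp
qed

end
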